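(* Let $A$ be a basic connected finite dimensional algebra over an algebraically closed field $k$ with ordinary quiver $Q$ without oriented cycles, and let $\nu\colon kQ\twoheadrightarrow A$ be a presentation. Then $\mathsf{Im}(\theta_\nu)\subseteq\mathsf{HH}^1(A)$ is diagonalizable.
   Context: Fix a complete set $e_1,\dots,e_n$ of primitive orthogonal idempotents of $A$ indexed by $Q_0=\{1,\dots,n\}$, $E=\bigoplus ke_i$, $\mathfrak r$ the radical. A presentation is a surjective algebra map $\nu\colon kQ\twoheadrightarrow A$ with admissible kernel ($(kQ^+)^N\subseteq\mathsf{Ker}\,\nu\subseteq(kQ^+)^2$ for some $N\ge2$, $kQ^+$ the arrow ideal) and $\nu(e_i)=e_i$. $\mathsf{HH}^1(A)=Der_0(A)/Int_0(A)$, with $Der_0(A)$ the derivations vanishing on all $e_i$ (commutator bracket) and $Int_0(A)=\{a\mapsto ea-ae\mid e\in E\}$. Walks: paths in $Q$ with formal inverse arrows allowed. For $I=\mathsf{Ker}\,\nu$, the homotopy relation $\sim_I$ is the smallest equivalence relation on walks with $\alpha\alpha^{-1}\sim_I e_y$, $\alpha^{-1}\alpha\sim_I e_x$ for arrows $\alpha\colon x\to y$, compatible with concatenation, and identifying two paths occurring with nonzero coefficient in a same minimal relation of $I$ (a nonzero $\sum t_iu_i\in I$, $t_i\neq0$, distinct paths $u_i$, no nonempty proper subsum in $I$). $\pi_1(Q,I)$ is the group of classes of closed walks at a fixed vertex $x_0$. Fix a maximal tree $T$ of $Q$, $\gamma_x$ the minimal walk in $T$ from $x_0$ to $x$. For a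 group homomorphism $f\colon\pi_1(Q,I)\to k^+$, $\theta_\nu(f)$ is the class of the derivation $\tilde f$ with $\tilde f(\nu(u))=f([\gamma_y^{-1}u\gamma_x]_I)\nu(u)$ for paths $u$ from $x$ to $y$; $\theta_\nu\colon\mathsf{Hom}(\pi_1(Q,I),k^+)\to\mathsf{HH}^1(A)$. A basis of $A$ is a $k$-basis $\mathcal B\subseteq\bigcup_{i,j}e_jAe_i$ containing $e_1,\dots,e_n$ with the other elements in $\mathfrak r$. A subset $D\subseteq\mathsf{HH}^1(A)$ is diagonalizable if there is a basis $\mathcal B$ of $A$ such that each $f\in D$ is represented by a derivation diagonal with respect to $\mathcal B$. *)

theory Defs
  imports "HOL-Computational_Algebra.Polynomial" "HOL-Algebra.Group"
begin

text \<open>A path is a triple (x, arrows in travel order, y);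
  the trivial path e_x is (x, [], x).\<close>

type_synonym ('v,'e) path = "'v \<times> 'e list \<times> 'v"

fun is_path :: "('e \<Rightarrow> 'v) \<Rightarrow> ('e \<Rightarrow> 'v) \<Rightarrow> ('v,'e) path \<Rightarrow> bool" where
  "is_path src tgt (x, [], y) = (x = y)"
| "is_path src tgt (x, a # as, y) = (src a = x \<and> is_path src tgt (tgt a, as, y))"

definition path_len :: "('v,'e) path \<Rightarrow> nat" where
  "path_len p = length (fst (snd p))"

definition no_oriented_cycles :: "('e \<Rightarrow> 'v) \<Rightarrow> ('e \<Rightarrow> 'v) \<Rightarrow> bool" where
  "no_oriented_cycles src tgt \<longleftrightarrow>
     \<not> (\<exists>x as. as \<noteq> [] \<and> is_path src tgt (x, as, x))"

text \<open>Walks: a step is (arrow, True) for the arrow and (arrow, False) for its formal inverse.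
  A walk is (start, steps in travel order, end).\<close>

type_synonym ('v,'e) walk = "'v \<times> ('e \<times> bool) list \<times> 'v"

definition step_src :: "('e \<Rightarrow> 'v) \<Rightarrow> ('e \<Rightarrow> 'v) \<Rightarrow> 'e \<times> bool \<Rightarrow> 'v" where
  "step_src src tgt st = (if snd st then src (fst st) else tgt (fst st))"

definition step_tgt :: "('e \<Rightarrow> 'v) \<Rightarrow> ('e \<Rightarrow> 'v) \<Rightarrow> 'e \<times> bool \<Rightarrow> 'v" where
  "step_tgt src tgt st = (if snd st then tgt (fst st) else src (fst st))"

fun is_walk :: "('e \<Rightarrow> 'v) \<Rightarrow> ('e \<Rightarrow> 'v) \<Rightarrow> ('v,'e) walk \<Rightarrow> bool" where
  "is_walk src tgt (x, [], y) = (x = y)"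
| "is_walk src tgt (x, st # sts, y) =
     (step_src src tgt st = x \<and> is_walk src tgt (step_tgt src tgt st, sts, y))"

definition wstart :: "('v,'e) walk \<Rightarrow> 'v" where "wstart w = fst w"
definition wend :: "('v,'e) walk \<Rightarrow> 'v" where "wend w = snd (snd w)"

definition wcat :: "('v,'e) walk \<Rightarrow> ('v,'e) walk \<Rightarrow> ('v,'e) walk" where
  "wcat w1 w2 = (fst w1, fst (snd w1) @ fst (snd w2), snd (snd w2))"

definition winv :: "('v,'e) walk \<Rightarrow> ('v,'e) walk" where
  "winv w = (snd (snd w), rev (map (\<lambda>(a,b). (a, \<not> b)) (fst (snd w))), fst w)"

definition path_walk :: "('v,'e) path \<Rightarrow> ('v,'e) walk" where
  "path_walk p = (fst p, map (\<lambda>a. (a, True)) (fst (snd p)), snd (snd p))"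

definition quiver_connected :: "('e \<Rightarrow> 'v) \<Rightarrow> ('e \<Rightarrow> 'v) \<Rightarrow> bool" where
  "quiver_connected src tgt \<longleftrightarrow> (\<forall>x y. \<exists>sts. is_walk src tgt (x, sts, y))"

definition walk_in :: "('e \<Rightarrow> 'v) \<Rightarrow> ('e \<Rightarrow> 'v) \<Rightarrow> 'e set \<Rightarrow> ('v,'e) walk \<Rightarrow> bool" where
  "walk_in src tgt T w \<longleftrightarrow> is_walk src tgt w \<and> (\<forall>st \<in> set (fst (snd w)). fst st \<in> T)"

definition reduced_walk :: "('v,'e) walk \<Rightarrow> bool" where
  "reduced_walk w \<longleftrightarrow> (\<forall>i. Suc i < length (fst (snd w)) \<longrightarrow>
      \<not> (fst (fst (snd w) ! i) = fst (fst (snd w) ! Suc i) \<and>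
         snd (fst (snd w) ! i) \<noteq> snd (fst (snd w) ! Suc i)))"

definition arrow_forest :: "('e \<Rightarrow> 'v) \<Rightarrow> ('e \<Rightarrow> 'v) \<Rightarrow> 'e set \<Rightarrow> bool" where
  "arrow_forest src tgt T \<longleftrightarrow>
     \<not> (\<exists>w. walk_in src tgt T w \<and> wstart w = wend w \<and> fst (snd w) \<noteq> [] \<and> reduced_walk w)"

definition maximal_tree :: "('e \<Rightarrow> 'v) \<Rightarrow> ('e \<Rightarrow> 'v) \<Rightarrow> 'e set \<Rightarrow> bool" where
  "maximal_tree src tgt T \<longleftrightarrow> arrow_forest src tgt T \<and>
     (\<forall>T'. T \<subset> T' \<longrightarrow> \<not> arrow_forest src tgt T')"

definition tree_walks :: "('e \<Rightarrow> 'v) \<Rightarrow> ('e \<Rightarrow> 'v) \<Rightarrow> 'e set \<Rightarrow> 'v \<Rightarrow> ('v \<Rightarrow> ('v,'e) walk) \<Rightarrow> bool" where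
  "tree_walks src tgt T x0 \<gamma> \<longleftrightarrow> (\<forall>x. walk_in src tgt T (\<gamma> x) \<and> wstart (\<gamma> x) = x0 \<and> wend (\<gamma> x) = x \<and>
      (\<forall>w. walk_in src tgt T w \<and> wstart w = x0 \<and> wend w = x \<longrightarrow>
           length (fst (snd (\<gamma> x))) \<le> length (fst (snd w))))"

definition kQ :: "('e \<Rightarrow> 'v) \<Rightarrow> ('e \<Rightarrow> 'v) \<Rightarrow> (('v,'e) path \<Rightarrow> 'k::zero) set" where
  "kQ src tgt = {a. finite {p. a p \<noteq> 0} \<and> (\<forall>p. \<not> is_path src tgt p \<longrightarrow> a p = 0)}"

definition psupp :: "(('v,'e) path \<Rightarrow> 'k::zero) \<Rightarrow> ('v,'e) path set" where
  "psupp a = {p. a p \<noteq> 0}"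

text \<open>Multiplication of kQ (functional convention: for paths u, v, the product u v is
  "first v, then u").\<close>
definition kQ_mult :: "('e \<Rightarrow> 'v) \<Rightarrow> ('e \<Rightarrow> 'v) \<Rightarrow> (('v,'e) path \<Rightarrow> 'k::comm_ring_1) \<Rightarrow>
     (('v,'e) path \<Rightarrow> 'k) \<Rightarrow> ('v,'e) path \<Rightarrow> 'k" where
  "kQ_mult src tgt a b p = (case p of (x, as, y) \<Rightarrow>
     (\<Sum>i\<in>{0..length as}.
        (let z = (if i = 0 then x else tgt (as ! (i - 1))) in
          b (x, take i as, z) * a (z, drop i as, y))))"

definition kQ_one :: "('v,'e) path \<Rightarrow> 'k::comm_ring_1" where
  "kQ_one p = (if fst (snd p) = [] \<and> fst p = snd (snd p) then 1 else 0)"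

definition pind :: "('v,'e) path \<Rightarrow> ('v,'e) path \<Rightarrow> 'k::comm_ring_1" where
  "pind u p = (if p = u then 1 else 0)"

definition arrow_ideal_pow :: "('e \<Rightarrow> 'v) \<Rightarrow> ('e \<Rightarrow> 'v) \<Rightarrow> nat \<Rightarrow> (('v,'e) path \<Rightarrow> 'k::comm_ring_1) set" where
  "arrow_ideal_pow src tgt N = {a \<in> kQ src tgt. \<forall>p. path_len p < N \<longrightarrow> a p = 0}"

definition admissible_ideal :: "('e \<Rightarrow> 'v) \<Rightarrow> ('e \<Rightarrow> 'v) \<Rightarrow> (('v,'e) path \<Rightarrow> 'k::comm_ring_1) set \<Rightarrow> bool" where
  "admissible_ideal src tgt I \<longleftrightarrow>
     (\<exists>N\<ge>2. arrow_ideal_pow src tgt N \<subseteq> I) \<and> I \<subseteq> arrow_ideal_pow src tgt 2"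

definition minimal_relation :: "(('v,'e) path \<Rightarrow> 'k::comm_ring_1) set \<Rightarrow> (('v,'e) path \<Rightarrow> 'k) \<Rightarrow> bool" where
  "minimal_relation I \<rho> \<longleftrightarrow> \<rho> \<in> I \<and> \<rho> \<noteq> (\<lambda>_. 0) \<and>
     (\<forall>S. S \<noteq> {} \<and> S \<subset> psupp \<rho> \<longrightarrow> (\<lambda>p. if p \<in> S then \<rho> p else 0) \<notin> I)"

inductive htpy :: "('e \<Rightarrow> 'v) \<Rightarrow> ('e \<Rightarrow> 'v) \<Rightarrow> (('v,'e) path \<Rightarrow> 'k::comm_ring_1) set \<Rightarrow>
    ('v,'e) walk \<Rightarrow> ('v,'e) walk \<Rightarrow> bool"
  for src tgt I where
  htpy_refl: "is_walk src tgt w \<Longrightarrow> htpy src tgt I w w"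
| htpy_sym: "htpy src tgt I w w' \<Longrightarrow> htpy src tgt I w' w"
| htpy_trans: "htpy src tgt I w w' \<Longrightarrow> htpy src tgt I w' w'' \<Longrightarrow> htpy src tgt I w w''"
| htpy_cancel_tgt: "htpy src tgt I (tgt \<alpha>, [(\<alpha>, False), (\<alpha>, True)], tgt \<alpha>) (tgt \<alpha>, [], tgt \<alpha>)"
| htpy_cancel_src: "htpy src tgt I (src \<alpha>, [(\<alpha>, True), (\<alpha>, False)], src \<alpha>) (src \<alpha>, [], src \<alpha>)"
| htpy_rel: "minimal_relation I \<rho> \<Longrightarrow> \<rho> u \<noteq> 0 \<Longrightarrow> \<rho> u' \<noteq> 0 \<Longrightarrow>
     is_path src tgt u \<Longrightarrow> is_path src tgt u' \<Longrightarrow>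
     htpy src tgt I (path_walk u) (path_walk u')"
| htpy_cat_left: "htpy src tgt I w w' \<Longrightarrow> is_walk src tgt v \<Longrightarrow> wend v = wstart w \<Longrightarrow>
     htpy src tgt I (wcat v w) (wcat v w')"
| htpy_cat_right: "htpy src tgt I w w' \<Longrightarrow> is_walk src tgt v \<Longrightarrow> wend w = wstart v \<Longrightarrow>
     htpy src tgt I (wcat w v) (wcat w' v)"

definition htpy_class :: "('e \<Rightarrow> 'v) \<Rightarrow> ('e \<Rightarrow> 'v) \<Rightarrow> (('v,'e) path \<Rightarrow> 'k::comm_ring_1) set \<Rightarrow>
    ('v,'e) walk \<Rightarrow> ('v,'e) walk set" where
  "htpy_class src tgt I w = {w'. htpy src tgt I w w'}"

text \<open>pi_1(Q,I) at x0: classes of closed walks at x0; the product [w][w'] = [w w'] where,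
  in the functional convention, w w' means first w', then w.\<close>
definition pi1 :: "('e \<Rightarrow> 'v) \<Rightarrow> ('e \<Rightarrow> 'v) \<Rightarrow> (('v,'e) path \<Rightarrow> 'k::comm_ring_1) set \<Rightarrow> 'v \<Rightarrow>
    ('v,'e) walk set monoid" where
  "pi1 src tgt I x0 =
    \<lparr>carrier = htpy_class src tgt I ` {w. is_walk src tgt w \<and> wstart w = x0 \<and> wend w = x0},
     monoid.mult = (\<lambda>C D. {w. \<exists>c\<in>C. \<exists>d\<in>D. htpy src tgt I (wcat d c) w}),
     one = htpy_class src tgt I (x0, [], x0)\<rparr>"

definition kplus :: "'k::comm_ring_1 monoid" where
  "kplus = \<lparr>carrier = UNIV, monoid.mult = (+), one = 0\<rparr>"

definition k_algebra :: "('k::field \<Rightarrow> 'a::ring_1 \<Rightarrow> 'a) \<Rightarrow> bool" where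
  "k_algebra sc \<longleftrightarrow> vector_space sc \<and>
     (\<forall>c x y. sc c (x * y) = sc c x * y \<and> sc c (x * y) = x * sc c y)"

definition finite_dimensional :: "('k::field \<Rightarrow> 'a::ring_1 \<Rightarrow> 'a) \<Rightarrow> bool" where
  "finite_dimensional sc \<longleftrightarrow> (\<exists>F. finite F \<and> module.span sc F = UNIV)"

definition connected_algebra :: "'a::ring_1 itself \<Rightarrow> bool" where
  "connected_algebra _ \<longleftrightarrow>
     (\<forall>c::'a. c * c = c \<and> (\<forall>x. c * x = x * c) \<longrightarrow> c = 0 \<or> c = 1)"

definition left_ideal :: "'a::ring_1 set \<Rightarrow> bool" where
  "left_ideal L \<longleftrightarrow> 0 \<in> L \<and> (\<forall>x\<in>L. \<forall>y\<in>L. x + y \<in> L) \<and> (\<forall>x\<in>L. - x \<in> L) \<and>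
     (\<forall>a x. x \<in> L \<longrightarrow> a * x \<in> L)"

definition maximal_left_ideal :: "'a::ring_1 set \<Rightarrow> bool" where
  "maximal_left_ideal L \<longleftrightarrow> left_ideal L \<and> L \<noteq> UNIV \<and>
     (\<forall>L'. left_ideal L' \<and> L \<subseteq> L' \<longrightarrow> L' = L \<or> L' = UNIV)"

definition jacobson_radical :: "'a::ring_1 set" where
  "jacobson_radical = \<Inter> {L. maximal_left_ideal L}"

definition algebra_map_kQ :: "('e \<Rightarrow> 'v::finite) \<Rightarrow> ('e \<Rightarrow> 'v) \<Rightarrow> ('k::field \<Rightarrow> 'a::ring_1 \<Rightarrow> 'a) \<Rightarrow>
    ((('v,'e) path \<Rightarrow> 'k) \<Rightarrow> 'a) \<Rightarrow> bool" where
  "algebra_map_kQ src tgt sc \<nu> \<longleftrightarrow>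
     (\<forall>a\<in>kQ src tgt. \<forall>b\<in>kQ src tgt. \<nu> (\<lambda>p. a p + b p) = \<nu> a + \<nu> b) \<and>
     (\<forall>c. \<forall>a\<in>kQ src tgt. \<nu> (\<lambda>p. c * a p) = sc c (\<nu> a)) \<and>
     (\<forall>a\<in>kQ src tgt. \<forall>b\<in>kQ src tgt. \<nu> (kQ_mult src tgt a b) = \<nu> a * \<nu> b) \<and>
     \<nu> kQ_one = 1"

text \<open>A presentation: surjective algebra map kQ -> A with admissible kernel; the idempotents
  e_i of A are identified with nu(e_i).\<close>
definition presentation :: "('e \<Rightarrow> 'v::finite) \<Rightarrow> ('e \<Rightarrow> 'v) \<Rightarrow> ('k::field \<Rightarrow> 'a::ring_1 \<Rightarrow> 'a) \<Rightarrow>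
    ((('v,'e) path \<Rightarrow> 'k) \<Rightarrow> 'a) \<Rightarrow> bool" where
  "presentation src tgt sc \<nu> \<longleftrightarrow> algebra_map_kQ src tgt sc \<nu> \<and>
     \<nu> ` kQ src tgt = UNIV \<and>
     admissible_ideal src tgt {a \<in> kQ src tgt. \<nu> a = 0}"

definition ker :: "('e \<Rightarrow> 'v) \<Rightarrow> ('e \<Rightarrow> 'v) \<Rightarrow> ((('v,'e) path \<Rightarrow> 'k::field) \<Rightarrow> 'a::ring_1) \<Rightarrow>
    (('v,'e) path \<Rightarrow> 'k) set" where
  "ker src tgt \<nu> = {a \<in> kQ src tgt. \<nu> a = 0}"

definition idemp :: "((('v,'e) path \<Rightarrow> 'k::field) \<Rightarrow> 'a::ring_1) \<Rightarrow> 'v \<Rightarrow> 'a" where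
  "idemp \<nu> x = \<nu> (pind (x, [], x))"

definition Der0 :: "('k::field \<Rightarrow> 'a::ring_1 \<Rightarrow> 'a) \<Rightarrow> ((('v,'e) path \<Rightarrow> 'k) \<Rightarrow> 'a) \<Rightarrow> ('a \<Rightarrow> 'a) set" where
  "Der0 sc \<nu> = {D. Vector_Spaces.linear sc sc D \<and> (\<forall>x y. D (x * y) = D x * y + x * D y) \<and>
                   (\<forall>i. D (idemp \<nu> i) = 0)}"

definition Int0 :: "('k::field \<Rightarrow> 'a::ring_1 \<Rightarrow> 'a) \<Rightarrow> ((('v,'e) path \<Rightarrow> 'k) \<Rightarrow> 'a) \<Rightarrow> ('a \<Rightarrow> 'a) set" where
  "Int0 sc \<nu> = {(\<lambda>a. e * a - a * e) | e. e \<in> module.span sc (range (idemp \<nu>))}"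

text \<open>D represents theta_nu(f): D is the k-linear map with
  D(nu(u)) = f([gamma_y^{-1} u gamma_x]_I) nu(u) for every path u from x to y.  (In travel order,
  the closed walk gamma_y^{-1} u gamma_x is: gamma_x, then u, then gamma_y inverted.)\<close>
definition theta_rep :: "('e \<Rightarrow> 'v::finite) \<Rightarrow> ('e \<Rightarrow> 'v) \<Rightarrow> ('k::field \<Rightarrow> 'a::ring_1 \<Rightarrow> 'a) \<Rightarrow>
    ((('v,'e) path \<Rightarrow> 'k) \<Rightarrow> 'a) \<Rightarrow> ('v \<Rightarrow> ('v,'e) walk) \<Rightarrow> (('v,'e) walk set \<Rightarrow> 'k) \<Rightarrow>
    ('a \<Rightarrow> 'a) \<Rightarrow> bool" where
  "theta_rep src tgt sc \<nu> \<gamma> f D \<longleftrightarrow> Vector_Spaces.linear sc sc D \<and>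
     (\<forall>u. is_path src tgt u \<longrightarrow>
        D (\<nu> (pind u)) =
          sc (f (htpy_class src tgt (ker src tgt \<nu>)
                   (wcat (wcat (\<gamma> (fst u)) (path_walk u)) (winv (\<gamma> (snd (snd u)))))))
             (\<nu> (pind u)))"

definition algebra_basis :: "('k::field \<Rightarrow> 'a::ring_1 \<Rightarrow> 'a) \<Rightarrow> ((('v,'e) path \<Rightarrow> 'k) \<Rightarrow> 'a) \<Rightarrow>
    'a set \<Rightarrow> bool" where
  "algebra_basis sc \<nu> B \<longleftrightarrow>
     \<not> module.dependent sc B \<and> module.span sc B = UNIV \<and>
     (\<forall>b\<in>B. \<exists>i j. b = idemp \<nu> j * b * idemp \<nu> i) \<and>
     range (idemp \<nu>) \<subseteq> B \<and>
     (\<forall>b\<in>B - range (idemp \<nu>). b \<in> jacobson_radical)"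

definition diagonal_wrt :: "('k::field \<Rightarrow> 'a::ring_1 \<Rightarrow> 'a) \<Rightarrow> 'a set \<Rightarrow> ('a \<Rightarrow> 'a) \<Rightarrow> bool" where
  "diagonal_wrt sc B D \<longleftrightarrow> (\<forall>b\<in>B. \<exists>c. D b = sc c b)"

definition image_theta_diagonalizable :: "('e \<Rightarrow> 'v::finite) \<Rightarrow> ('e \<Rightarrow> 'v) \<Rightarrow>
    ('k::field \<Rightarrow> 'a::ring_1 \<Rightarrow> 'a) \<Rightarrow> ((('v,'e) path \<Rightarrow> 'k) \<Rightarrow> 'a) \<Rightarrow> 'v \<Rightarrow>
    ('v \<Rightarrow> ('v,'e) walk) \<Rightarrow> bool" where
  "image_theta_diagonalizable src tgt sc \<nu> x0 \<gamma> \<longleftrightarrow>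
     (\<exists>B. algebra_basis sc \<nu> B \<and>
        (\<forall>f \<in> hom (pi1 src tgt (ker src tgt \<nu>) x0) (kplus :: 'k monoid).
           \<forall>D. theta_rep src tgt sc \<nu> \<gamma> f D \<longrightarrow>
             (\<exists>\<delta> \<in> Der0 sc \<nu>. diagonal_wrt sc B \<delta> \<and> (\<lambda>a. D a - \<delta> a) \<in> Int0 sc \<nu>)))"

end

(*
  The images in A of the paths of Q span A.  The representative of theta_nu(f) given by f acts
  on the image of a path u from x to y as multiplication by f [gamma_y^-1 u gamma_x]; since
  concatenating paths multiplies these loop classes in pi_1(Q,I) and f is a homomorphism, the
  scalars are additive, which makes this representative itself a derivation in Der_0(A).  It is
  diagonal in every basis made of path images, and such a basis exists that contains the e_i
  (independent because the kernel of nu is admissible) and otherwise consists of images of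
  paths of positive length, which are radical since the arrow ideal is nilpotent modulo the
  kernel.
*)
theory Submission
  imports Defs
begin

lemma is_path_append:
  "is_path src tgt (x, as @ bs, y) \<longleftrightarrow> (\<exists>z. is_path src tgt (x, as, z) \<and> is_path src tgt (z, bs, y))"
  by (induction as arbitrary: x) auto

lemma is_walk_append:
  "is_walk src tgt (x, as @ bs, y) \<longleftrightarrow> (\<exists>z. is_walk src tgt (x, as, z) \<and> is_walk src tgt (z, bs, y))"
  by (induction as arbitrary: x) auto

lemma is_path_last: "is_path src tgt (x, as, y) \<Longrightarrow> as \<noteq> [] \<Longrightarrow> tgt (last as) = y"
proof (induction as arbitrary: x)
  case (Cons a as)
  then show ?case by (cases as) auto
qed simp

lemma is_walk_path_walk: "is_path src tgt u \<Longrightarrow> is_walk src tgt (path_walk u)"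
proof -
  have "is_path src tgt (x, as, y) \<Longrightarrow> is_walk src tgt (x, map (\<lambda>a. (a, True)) as, y)" for x as y
    by (induction as arbitrary: x) (auto simp: step_src_def step_tgt_def)
  then show "is_path src tgt u \<Longrightarrow> is_walk src tgt (path_walk u)"
    by (cases u) (auto simp: path_walk_def)
qed

text \<open>Travel order, first u and then v: opposite to the product of kQ.\<close>
definition pcat :: "('v,'e) path \<Rightarrow> ('v,'e) path \<Rightarrow> ('v,'e) path" where
  "pcat u v = (fst u, fst (snd u) @ fst (snd v), snd (snd v))"

lemma is_path_pcat:
  "is_path src tgt u \<Longrightarrow> is_path src tgt v \<Longrightarrow> snd (snd u) = fst v \<Longrightarrow> is_path src tgt (pcat u v)"
  by (cases u; cases v) (auto simp: pcat_def is_path_append)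

lemma path_len_pcat: "path_len (pcat u v) = path_len u + path_len v"
  by (simp add: pcat_def path_len_def)

lemma wstart_wcat [simp]: "wstart (wcat v w) = wstart v"
  by (simp add: wcat_def wstart_def)

lemma wend_wcat [simp]: "wend (wcat v w) = wend w"
  by (simp add: wcat_def wend_def)

lemma wstart_path_walk [simp]: "wstart (path_walk u) = fst u"
  by (simp add: path_walk_def wstart_def)

lemma wend_path_walk [simp]: "wend (path_walk u) = snd (snd u)"
  by (simp add: path_walk_def wend_def)

lemma wstart_winv [simp]: "wstart (winv w) = wend w"
  by (simp add: winv_def wstart_def wend_def)

lemma wend_winv [simp]: "wend (winv w) = wstart w"
  by (simp add: winv_def wstart_def wend_def)

lemma is_walk_wcat:
  "is_walk src tgt v \<Longrightarrow> is_walk src tgt w \<Longrightarrow> wend v = wstart w \<Longrightarrow> is_walk src tgt (wcat v w)"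
  by (cases v; cases w) (auto simp: wcat_def wend_def wstart_def is_walk_append)

lemma is_walk_winv: "is_walk src tgt w \<Longrightarrow> is_walk src tgt (winv w)"
proof -
  have "is_walk src tgt (x, sts, y) \<Longrightarrow> is_walk src tgt (y, rev (map (\<lambda>(a, b). (a, \<not> b)) sts), x)"
    for x sts y
    by (induction sts arbitrary: x)
      (auto simp: is_walk_append step_src_def step_tgt_def split: prod.splits)
  then show "is_walk src tgt w \<Longrightarrow> is_walk src tgt (winv w)"
    by (cases w) (simp add: winv_def)
qed

lemma htpy_wcat_winv_self:
  assumes "is_walk src tgt w"
  shows "htpy src tgt I (wcat (winv w) w) (wend w, [], wend w)"
proof -
  have "is_walk src tgt (x, sts, y) \<Longrightarrow>
      htpy src tgt I (y, rev (map (\<lambda>(a, b). (a, \<not> b)) sts) @ sts, y) (y, [], y)" for x sts y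
  proof (induction sts arbitrary: x)
    case Nil
    then show ?case by (auto intro: htpy_refl)
  next
    case (Cons st sts)
    obtain \<alpha> b where st: "st = (\<alpha>, b)" by (cases st)
    define m where "m = step_tgt src tgt st"
    define rw where "rw = (y, rev (map (\<lambda>(a, b). (a, \<not> b)) sts), m)"
    have sts: "is_walk src tgt (m, sts, y)" using Cons.prems by (simp add: m_def)
    have rw: "is_walk src tgt rw" "wend rw = m"
      using is_walk_winv[OF sts] by (simp_all add: rw_def winv_def wend_def)
    have "htpy src tgt I (m, [(\<alpha>, \<not> b), (\<alpha>, b)], m) (m, [], m)"
      by (cases b) (auto simp: st m_def step_tgt_def intro: htpy_cancel_tgt htpy_cancel_src)
    then have "htpy src tgt I (wcat rw (m, [(\<alpha>, \<not> b), (\<alpha>, b)], m)) (wcat rw (m, [], m))"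
      using rw by (intro htpy_cat_left) (simp_all add: wstart_def)
    then have "htpy src tgt I (wcat (wcat rw (m, [(\<alpha>, \<not> b), (\<alpha>, b)], m)) (m, sts, y))
        (wcat (wcat rw (m, [], m)) (m, sts, y))"
      using sts by (intro htpy_cat_right) (simp_all add: wcat_def wstart_def wend_def)
    then have "htpy src tgt I (y, rev (map (\<lambda>(a, b). (a, \<not> b)) (st # sts)) @ st # sts, y)
        (y, rev (map (\<lambda>(a, b). (a, \<not> b)) sts) @ sts, y)"
      by (simp add: rw_def wcat_def st)
    then show ?case using Cons.IH[OF sts] by (rule htpy_trans)
  qed
  from this[of "wstart w" "fst (snd w)" "wend w"] assms show ?thesis
    by (cases w) (simp add: winv_def wcat_def wstart_def wend_def)
qed

lemma zero_in_kQ: "(\<lambda>p. 0) \<in> kQ src tgt"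
  by (simp add: kQ_def)

lemma add_in_kQ:
  fixes a b :: "('v,'e) path \<Rightarrow> 'k::monoid_add"
  assumes "a \<in> kQ src tgt" "b \<in> kQ src tgt"
  shows "(\<lambda>p. a p + b p) \<in> kQ src tgt"
proof -
  have "{p. a p + b p \<noteq> 0} \<subseteq> {p. a p \<noteq> 0} \<union> {p. b p \<noteq> 0}" by auto
  moreover have "finite ({p. a p \<noteq> 0} \<union> {p. b p \<noteq> 0})" using assms by (simp add: kQ_def)
  ultimately have "finite {p. a p + b p \<noteq> 0}" by (rule finite_subset)
  with assms show ?thesis by (simp add: kQ_def)
qed

lemma scale_in_kQ:
  fixes a :: "('v,'e) path \<Rightarrow> 'k::mult_zero"
  assumes "a \<in> kQ src tgt"
  shows "(\<lambda>p. c * a p) \<in> kQ src tgt"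
proof -
  have "{p. c * a p \<noteq> 0} \<subseteq> {p. a p \<noteq> 0}" by auto
  moreover have "finite {p. a p \<noteq> 0}" using assms by (simp add: kQ_def)
  ultimately have "finite {p. c * a p \<noteq> 0}" by (rule finite_subset)
  with assms show ?thesis by (simp add: kQ_def)
qed

lemma pind_in_kQ:
  assumes "is_path src tgt u"
  shows "(pind u :: ('v,'e) path \<Rightarrow> 'k::comm_ring_1) \<in> kQ src tgt"
proof -
  have "{p. pind u p \<noteq> (0::'k)} \<subseteq> {u}" by (auto simp: pind_def)
  with assms show ?thesis by (auto simp: kQ_def pind_def intro: finite_subset)
qed

lemma sum_in_kQ:
  fixes g :: "'s \<Rightarrow> ('v,'e) path \<Rightarrow> 'k::comm_monoid_add"
  shows "finite S \<Longrightarrow> (\<And>s. s \<in> S \<Longrightarrow> g s \<in> kQ src tgt) \<Longrightarrow>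
    (\<lambda>p. \<Sum>s\<in>S. g s p) \<in> kQ src tgt"
  by (induction S rule: finite_induct) (simp_all add: zero_in_kQ add_in_kQ)

lemma is_path_if_in_kQ: "a \<in> kQ src tgt \<Longrightarrow> a p \<noteq> 0 \<Longrightarrow> is_path src tgt p"
  by (cases p) (auto simp: kQ_def)

lemma kQ_mult_pind:
  fixes u v :: "('v,'e) path"
  assumes u: "is_path src tgt u" and v: "is_path src tgt v"
  shows "kQ_mult src tgt (pind v) (pind u) =
    (if snd (snd u) = fst v then pind (pcat u v) else (\<lambda>p. 0 :: 'k::comm_ring_1))"
proof
  fix p :: "('v,'e) path"
  obtain x as y where p: "p = (x, as, y)" by (cases p)
  obtain a1 l1 b1 where U: "u = (a1, l1, b1)" by (cases u)
  define z where "z i = (if i = 0 then x else tgt (as ! (i - 1)))" for i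
  let ?hit = "\<lambda>i. (x, take i as, z i) = u \<and> (z i, drop i as, y) = v"
  let ?C = "p = pcat u v \<and> snd (snd u) = fst v"
  have hit: "?hit i \<longleftrightarrow> i = length l1 \<and> ?C" if "i \<le> length as" for i
  proof
    assume h: "?hit i"
    then have "take i as = l1" "drop i as = fst (snd v)" using U by auto
    then have "as = l1 @ fst (snd v)" "i = length l1"
      using that by (metis append_take_drop_id, auto)
    then show "i = length l1 \<and> ?C" using h p U by (cases v) (auto simp: pcat_def)
  next
    assume h: "i = length l1 \<and> ?C"
    then have as: "as = l1 @ fst (snd v)" "x = a1" "y = snd (snd v)" "b1 = fst v"
      using p U by (auto simp: pcat_def)
    have "z i = b1"
    proof (cases "l1 = []")
      case True
      then show ?thesis using u U h as by (simp add: z_def)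
    next
      case False
      then have "as ! (i - 1) = last l1" using h as by (simp add: last_conv_nth nth_append)
      then show ?thesis using is_path_last[of src tgt a1 l1 b1] u U False h by (simp add: z_def)
    qed
    then show "?hit i" using h as U by (cases v) simp
  qed
  have "kQ_mult src tgt (pind v) (pind u) p = (\<Sum>i\<in>{0..length as}. if ?hit i then 1 else 0)"
    by (simp add: kQ_mult_def p z_def[symmetric] Let_def pind_def)
      (intro sum.cong; simp)
  also have "\<dots> = (\<Sum>i\<in>{0..length as}. if i = length l1 \<and> ?C then 1 else 0)"
    using hit by (intro sum.cong) auto
  also have "\<dots> = (if ?C then 1 else 0)"
    using p U by (auto simp: pcat_def)
  also have "\<dots> = (if snd (snd u) = fst v then pind (pcat u v) else (\<lambda>p. 0)) p"
    by (simp add: pind_def)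
  finally show "kQ_mult src tgt (pind v) (pind u) p =
      (if snd (snd u) = fst v then pind (pcat u v) else (\<lambda>p. 0)) p" .
qed

lemma sum_powers_mult_one_diff: "(\<Sum>i<n. x ^ i) * (1 - x) = 1 - x ^ n" for x :: "'a::ring_1"
proof (induction n)
  case (Suc n)
  have "(\<Sum>i<Suc n. x ^ i) * (1 - x) = (1 - x ^ n) + x ^ n * (1 - x)"
    using Suc.IH by (simp add: distrib_right)
  also have "\<dots> = 1 - x ^ Suc n"
    by (simp add: right_diff_distrib power_Suc2 power_commutes)
  finally show ?case .
qed simp

lemma left_ideal_add_left_multiples:
  assumes L: "left_ideal L"
  shows "left_ideal {l + a * b | l a. l \<in> L}"
  unfolding left_ideal_def
proof (intro conjI allI ballI impI)
  have "0 = 0 + 0 * b" "0 \<in> L" using L by (simp_all add: left_ideal_def)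
  then show "0 \<in> {l + a * b | l a. l \<in> L}" by blast
next
  fix x y assume "x \<in> {l + a * b | l a. l \<in> L}" "y \<in> {l + a * b | l a. l \<in> L}"
  then obtain l a l' a' where "x = l + a * b" "y = l' + a' * b" "l \<in> L" "l' \<in> L" by blast
  moreover have "x + y = (l + l') + (a + a') * b" using calculation by (simp add: algebra_simps)
  moreover have "l + l' \<in> L" using L calculation by (simp add: left_ideal_def)
  ultimately show "x + y \<in> {l + a * b | l a. l \<in> L}" by blast
next
  fix x assume "x \<in> {l + a * b | l a. l \<in> L}"
  then obtain l a where "x = l + a * b" "l \<in> L" by blast
  moreover have "- x = - l + (- a) * b" using calculation by simp
  moreover have "- l \<in> L" using L calculation by (simp add: left_ideal_def)
  ultimately show "- x \<in> {l + a * b | l a. l \<in> L}" by blast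
next
  fix r x assume "x \<in> {l + a * b | l a. l \<in> L}"
  then obtain l a where "x = l + a * b" "l \<in> L" by blast
  moreover have "r * x = r * l + (r * a) * b" using calculation by (simp add: distrib_left mult.assoc)
  moreover have "r * l \<in> L" using L calculation by (simp add: left_ideal_def)
  ultimately show "r * x \<in> {l + a * b | l a. l \<in> L}" by blast
qed

text \<open>Each 1 - a b is invertible by the geometric series.  If b avoided a maximal left ideal L,
  then L + A b = A would put some 1 - a b into L.\<close>
lemma in_jacobson_radical_if_left_multiples_nilpotent:
  fixes b :: "'a::ring_1"
  assumes nilpotent: "\<And>a. \<exists>n. (a * b) ^ n = 0"
  shows "b \<in> jacobson_radical"
proof -
  have "b \<in> L" if max: "maximal_left_ideal L" for L
  proof (rule ccontr)
    assume b: "b \<notin> L"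
    have L: "left_ideal L" "L \<noteq> UNIV" using max by (simp_all add: maximal_left_ideal_def)
    define L' where "L' = {l + a * b | l a. l \<in> L}"
    have "L \<subseteq> L'"
    proof
      fix l assume "l \<in> L"
      moreover have "l = l + 0 * b" by simp
      ultimately show "l \<in> L'" unfolding L'_def by blast
    qed
    moreover have "b \<in> L'"
    proof -
      have "b = 0 + 1 * b" "0 \<in> L" using L(1) by (simp_all add: left_ideal_def)
      then show ?thesis unfolding L'_def by blast
    qed
    moreover have "left_ideal L'"
      unfolding L'_def by (rule left_ideal_add_left_multiples[OF L(1)])
    ultimately have "L' = UNIV"
      using max b unfolding maximal_left_ideal_def by blast
    then obtain l a where la: "1 = l + a * b" "l \<in> L" unfolding L'_def by blast
    have "l = 1 - a * b" using la(1) by (simp add: eq_diff_eq)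
    moreover obtain n where "(a * b) ^ n = 0" using nilpotent by blast
    ultimately have "(\<Sum>i<n. (a * b) ^ i) * l = 1"
      using sum_powers_mult_one_diff[where x = "a * b" and n = n] by simp
    then have "1 \<in> L" using L(1) la(2) by (metis left_ideal_def)
    then have "r \<in> L" for r using L(1) by (metis left_ideal_def mult_1_right)
    then show False using L(2) by blast
  qed
  then show ?thesis by (auto simp: jacobson_radical_def)
qed

lemma (in module) span_induct2:
  assumes x: "x \<in> span S" and y: "y \<in> span T"
    and subspace_left: "\<And>y. subspace {x. R x y}" and subspace_right: "\<And>x. subspace {y. R x y}"
    and generators: "\<And>s t. s \<in> S \<Longrightarrow> t \<in> T \<Longrightarrow> R s t"
  shows "R x y"
proof -
  have left_generators: "R s y" if "s \<in> S" for s
    using y by (induction rule: span_induct) (auto intro: subspace_right generators[OF that])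
  from x show ?thesis
    by (induction rule: span_induct) (auto intro: subspace_left left_generators)
qed

locale field_algebra = vector_space sc for sc :: "'k::field \<Rightarrow> 'a::ring_1 \<Rightarrow> 'a" +
  assumes scale_mult_left: "sc c (x * y) = sc c x * y"
    and scale_mult_right: "sc c (x * y) = x * sc c y"
begin

lemma span_mult:
  assumes x: "x \<in> span S" and y: "y \<in> span T"
    and generators: "\<And>s t. s \<in> S \<Longrightarrow> t \<in> T \<Longrightarrow> s * t \<in> span U"
  shows "x * y \<in> span U"
  using x y
proof (rule span_induct2[where R = "\<lambda>x y. x * y \<in> span U"])
  show "subspace {x. x * y \<in> span U}" for y
    unfolding subspace_def
    by (auto simp: distrib_right span_zero span_add scale_mult_left[symmetric] span_scale)
  show "subspace {y. x * y \<in> span U}" for x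
    unfolding subspace_def
    by (auto simp: distrib_left span_zero span_add scale_mult_right[symmetric] span_scale)
qed (rule generators)

end

lemma field_algebra_if_k_algebra: "k_algebra sc \<Longrightarrow> field_algebra sc"
  unfolding k_algebra_def field_algebra_def field_algebra_axioms_def by blast

locale presented_algebra = field_algebra sc for sc :: "'k::field \<Rightarrow> 'a::ring_1 \<Rightarrow> 'a" +
  fixes src tgt :: "'e \<Rightarrow> 'v::finite" and \<nu> :: "(('v,'e) path \<Rightarrow> 'k) \<Rightarrow> 'a"
  assumes presentation: "presentation src tgt sc \<nu>"
begin

lemma nu_add: "a \<in> kQ src tgt \<Longrightarrow> b \<in> kQ src tgt \<Longrightarrow> \<nu> (\<lambda>p. a p + b p) = \<nu> a + \<nu> b"
  using presentation by (simp add: presentation_def algebra_map_kQ_def)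

lemma nu_scale: "a \<in> kQ src tgt \<Longrightarrow> \<nu> (\<lambda>p. c * a p) = sc c (\<nu> a)"
  using presentation by (simp add: presentation_def algebra_map_kQ_def)

lemma nu_mult: "a \<in> kQ src tgt \<Longrightarrow> b \<in> kQ src tgt \<Longrightarrow> \<nu> (kQ_mult src tgt a b) = \<nu> a * \<nu> b"
  using presentation by (simp add: presentation_def algebra_map_kQ_def)

lemma nu_surj: "\<nu> ` kQ src tgt = UNIV"
  using presentation by (simp add: presentation_def)

lemma admissible_ker: "admissible_ideal src tgt (ker src tgt \<nu>)"
  using presentation by (simp add: presentation_def ker_def)

lemma nu_zero: "\<nu> (\<lambda>p. 0) = 0"
  using nu_scale[OF zero_in_kQ, of 0] by simp

lemma nu_sum:
  "finite S \<Longrightarrow> (\<And>s. s \<in> S \<Longrightarrow> g s \<in> kQ src tgt) \<Longrightarrow>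
    \<nu> (\<lambda>p. \<Sum>s\<in>S. g s p) = (\<Sum>s\<in>S. \<nu> (g s))"
  by (induction S rule: finite_induct) (simp_all add: nu_zero nu_add sum_in_kQ)

lemma nu_eq_sum_pind:
  assumes a: "a \<in> kQ src tgt"
  shows "\<nu> a = (\<Sum>p\<in>psupp a. sc (a p) (\<nu> (pind p)))"
proof -
  have fin: "finite (psupp a)" using a by (simp add: kQ_def psupp_def)
  have paths: "is_path src tgt p" if "p \<in> psupp a" for p
    using that a by (simp add: psupp_def is_path_if_in_kQ)
  have "\<nu> a = \<nu> (\<lambda>q. \<Sum>p\<in>psupp a. a p * pind p q)"
  proof (rule arg_cong[where f = \<nu>], rule ext)
    fix q
    have "(\<Sum>p\<in>psupp a. a p * pind p q) = (\<Sum>p\<in>psupp a. if q = p then a p else 0)"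
      by (rule sum.cong) (auto simp: pind_def)
    also have "\<dots> = a q" using fin by (simp add: psupp_def)
    finally show "a q = (\<Sum>p\<in>psupp a. a p * pind p q)" by simp
  qed
  also have "\<dots> = (\<Sum>p\<in>psupp a. \<nu> (\<lambda>q. a p * pind p q))"
    using fin paths by (intro nu_sum scale_in_kQ pind_in_kQ)
  also have "\<dots> = (\<Sum>p\<in>psupp a. sc (a p) (\<nu> (pind p)))"
    using paths by (intro sum.cong nu_scale pind_in_kQ) simp_all
  finally show ?thesis .
qed

definition path_images :: "nat \<Rightarrow> 'a set" where
  "path_images n = {\<nu> (pind p) | p. is_path src tgt p \<and> n \<le> path_len p}"

lemma span_path_images_0: "span (path_images 0) = UNIV"
proof -
  have "y \<in> span (path_images 0)" for y
  proof -
    obtain a where a: "a \<in> kQ src tgt" "y = \<nu> a" using nu_surj by blast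
    show ?thesis
      unfolding a(2) nu_eq_sum_pind[OF a(1)] using a(1)
      by (intro span_sum span_scale span_base)
        (auto simp: path_images_def psupp_def dest: is_path_if_in_kQ)
  qed
  then show ?thesis by blast
qed

lemma nu_pind_mult:
  assumes "is_path src tgt u" "is_path src tgt v"
  shows "\<nu> (pind v) * \<nu> (pind u) = (if snd (snd u) = fst v then \<nu> (pind (pcat u v)) else 0)"
proof -
  have "\<nu> (pind v) * \<nu> (pind u) = \<nu> (kQ_mult src tgt (pind v) (pind u))"
    using nu_mult[OF pind_in_kQ[OF assms(2)] pind_in_kQ[OF assms(1)]] by simp
  also have "\<dots> = (if snd (snd u) = fst v then \<nu> (pind (pcat u v)) else 0)"
    by (simp add: kQ_mult_pind[OF assms] nu_zero)
  finally show ?thesis .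
qed

lemma idemp_mult_pind_mult_idemp:
  assumes "is_path src tgt p"
  shows "idemp \<nu> y * \<nu> (pind p) * idemp \<nu> x =
    (if fst p = x \<and> snd (snd p) = y then \<nu> (pind p) else 0)"
  using nu_pind_mult[OF assms, of "(y, [], y)"] nu_pind_mult[OF _ assms, of "(x, [], x)"] assms
  by (cases p) (auto simp: idemp_def pcat_def)

text \<open>Cutting a relation down to the paths from x to y amounts to multiplying it by e_y and
  e_x; this keeps it in the kernel, so by minimality nothing is cut away.\<close>
lemma minimal_relation_same_endpoints:
  assumes min: "minimal_relation (ker src tgt \<nu>) \<rho>" and u: "\<rho> u \<noteq> 0" and u': "\<rho> u' \<noteq> 0"
  shows "fst u' = fst u \<and> snd (snd u') = snd (snd u)"
proof -
  have \<rho>: "\<rho> \<in> kQ src tgt" "\<nu> \<rho> = 0" using min by (auto simp: minimal_relation_def ker_def)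
  have fin: "finite (psupp \<rho>)" using \<rho>(1) by (simp add: kQ_def psupp_def)
  define x where "x = fst u"
  define y where "y = snd (snd u)"
  define S where "S = {p \<in> psupp \<rho>. fst p = x \<and> snd (snd p) = y}"
  define \<rho>' where "\<rho>' = (\<lambda>p. if p \<in> S then \<rho> p else 0)"
  have S: "S \<subseteq> psupp \<rho>" "psupp \<rho>' = S" by (auto simp: psupp_def \<rho>'_def S_def)
  have \<rho>': "\<rho>' \<in> kQ src tgt"
    using \<rho>(1) finite_subset[OF S(1) fin] S(2) by (auto simp: kQ_def \<rho>'_def psupp_def)
  have "\<nu> \<rho>' = (\<Sum>p\<in>S. sc (\<rho> p) (\<nu> (pind p)))"
    unfolding nu_eq_sum_pind[OF \<rho>'] S(2) by (rule sum.cong) (auto simp: \<rho>'_def)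
  also have "\<dots> = (\<Sum>p\<in>psupp \<rho>. if fst p = x \<and> snd (snd p) = y then sc (\<rho> p) (\<nu> (pind p)) else 0)"
    unfolding S_def using fin by (rule sum.inter_filter)
  also have "\<dots> = (\<Sum>p\<in>psupp \<rho>. idemp \<nu> y * sc (\<rho> p) (\<nu> (pind p)) * idemp \<nu> x)"
  proof (rule sum.cong[OF refl])
    fix p assume "p \<in> psupp \<rho>"
    then have "is_path src tgt p" using \<rho>(1) by (simp add: psupp_def is_path_if_in_kQ)
    then show "(if fst p = x \<and> snd (snd p) = y then sc (\<rho> p) (\<nu> (pind p)) else 0) =
        idemp \<nu> y * sc (\<rho> p) (\<nu> (pind p)) * idemp \<nu> x"
      using idemp_mult_pind_mult_idemp[of p y x]
      by (simp add: scale_mult_left[symmetric] scale_mult_right[symmetric])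
  qed
  also have "\<dots> = idemp \<nu> y * \<nu> \<rho> * idemp \<nu> x"
    unfolding nu_eq_sum_pind[OF \<rho>(1)] by (simp add: sum_distrib_left sum_distrib_right)
  finally have "\<rho>' \<in> ker src tgt \<nu>" using \<rho> \<rho>' by (simp add: ker_def)
  moreover have "u \<in> S" using u by (simp add: S_def psupp_def x_def y_def)
  ultimately have "S = psupp \<rho>" using min S(1) unfolding minimal_relation_def \<rho>'_def by blast
  then have "u' \<in> S" using u' by (simp add: psupp_def)
  then show ?thesis by (simp add: S_def x_def y_def)
qed

lemma htpy_imp_walks:
  "htpy src tgt (ker src tgt \<nu>) w w' \<Longrightarrow>
    is_walk src tgt w \<and> is_walk src tgt w' \<and> wstart w' = wstart w \<and> wend w' = wend w"
proof (induction rule: htpy.induct)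
  case (htpy_rel \<rho> u u')
  then show ?case
    using minimal_relation_same_endpoints[of \<rho> u u'] by (simp add: is_walk_path_walk)
next
  case (htpy_cat_left w w' v)
  then show ?case by (simp add: is_walk_wcat)
next
  case (htpy_cat_right w w' v)
  then show ?case by (simp add: is_walk_wcat)
qed (auto simp: step_src_def step_tgt_def wstart_def wend_def)

lemma span_path_images_mult:
  assumes "x \<in> span (path_images m)" "y \<in> span (path_images n)"
  shows "x * y \<in> span (path_images (m + n))"
  using assms
proof (rule span_mult)
  fix s t assume "s \<in> path_images m" "t \<in> path_images n"
  then obtain p q where pq: "s = \<nu> (pind p)" "is_path src tgt p" "m \<le> path_len p"
    "t = \<nu> (pind q)" "is_path src tgt q" "n \<le> path_len q"
    unfolding path_images_def by blast
  have "\<nu> (pind (pcat q p)) \<in> path_images (m + n)" if "snd (snd q) = fst p"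
    using pq that is_path_pcat[OF pq(5) pq(2)] unfolding path_images_def
    by (intro CollectI exI[of _ "pcat q p"]) (simp add: path_len_pcat)
  then show "s * t \<in> span (path_images (m + n))"
    using nu_pind_mult[OF pq(5) pq(2)] pq by (auto intro: span_base simp: span_zero)
qed

lemma span_path_images_vanish: "\<exists>N. span (path_images N) = {0}"
proof -
  obtain N where N: "arrow_ideal_pow src tgt N \<subseteq> ker src tgt \<nu>"
    using admissible_ker by (auto simp: admissible_ideal_def)
  have "path_images N \<subseteq> {0}"
  proof
    fix z assume "z \<in> path_images N"
    then obtain p where p: "z = \<nu> (pind p)" "is_path src tgt p" "N \<le> path_len p"
      unfolding path_images_def by blast
    then have "pind p \<in> arrow_ideal_pow src tgt N"
      using pind_in_kQ[OF p(2)] by (auto simp: arrow_ideal_pow_def pind_def)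
    then show "z \<in> {0}" using N p by (auto simp: ker_def)
  qed
  then have "span (path_images N) = {0}"
    using span_mono[of "path_images N" "{0}"] by (auto simp: span_zero)
  then show ?thesis ..
qed

lemma pind_in_jacobson_radical:
  assumes "is_path src tgt u" "1 \<le> path_len u"
  shows "\<nu> (pind u) \<in> jacobson_radical"
proof (rule in_jacobson_radical_if_left_multiples_nilpotent)
  fix a
  obtain N where N: "span (path_images N) = {0}" using span_path_images_vanish by blast
  have "\<nu> (pind u) \<in> span (path_images 1)"
    using assms unfolding path_images_def by (intro span_base) blast
  then have au: "a * \<nu> (pind u) \<in> span (path_images 1)"
    using span_path_images_mult[of a 0] span_path_images_0 by simp
  have "(a * \<nu> (pind u)) ^ k \<in> span (path_images k)" for k
  proof (induction k)
    case 0
    then show ?case using span_path_images_0 by simp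
  next
    case (Suc k)
    then show ?case using span_path_images_mult[OF au Suc.IH] by simp
  qed
  then show "\<exists>n. (a * \<nu> (pind u)) ^ n = 0" using N by blast
qed

text \<open>A vanishing combination of the e_i lifts to a combination of trivial paths lying in the
  kernel; admissibility forces every kernel element to vanish on paths of length below 2.\<close>
lemma idemp_independent: "independent (range (idemp \<nu>))"
proof
  assume "dependent (range (idemp \<nu>))"
  then obtain t c e where t: "finite t" "t \<subseteq> range (idemp \<nu>)" "(\<Sum>v\<in>t. sc (c v) v) = 0"
    and e: "e \<in> t" "c e \<noteq> 0"
    unfolding dependent_explicit by blast
  obtain i where i: "\<And>v. v \<in> t \<Longrightarrow> idemp \<nu> (i v) = v" using t(2) by (metis f_inv_into_f subsetD)
  define g where "g v = (\<lambda>q. c v * pind (i v, [] :: 'e list, i v) q)" for v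
  have g: "g v \<in> kQ src tgt" for v unfolding g_def by (intro scale_in_kQ pind_in_kQ) simp
  have "\<nu> (\<lambda>p. \<Sum>v\<in>t. g v p) = (\<Sum>v\<in>t. sc (c v) v)"
    unfolding nu_sum[OF t(1) g] using i
    by (intro sum.cong) (simp_all add: g_def nu_scale pind_in_kQ idemp_def)
  then have "(\<lambda>p. \<Sum>v\<in>t. g v p) \<in> arrow_ideal_pow src tgt 2"
    using t(3) admissible_ker sum_in_kQ[OF t(1) g] by (auto simp: admissible_ideal_def ker_def)
  then have "(\<Sum>v\<in>t. g v (i e, [], i e)) = 0"
    by (auto simp: arrow_ideal_pow_def path_len_def)
  moreover have "(\<Sum>v\<in>t. g v (i e, [], i e)) = c e"
  proof -
    have "i e = i v \<longleftrightarrow> v = e" if "v \<in> t" for v using i[OF that] i[OF e(1)] by metis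
    then have "(\<Sum>v\<in>t. g v (i e, [], i e)) = (\<Sum>v\<in>t. if v = e then c v else 0)"
      by (intro sum.cong) (auto simp: g_def pind_def)
    then show ?thesis using t(1) e(1) by simp
  qed
  ultimately show False using e(2) by simp
qed

lemma exists_path_basis: "\<exists>B \<subseteq> path_images 0. algebra_basis sc \<nu> B"
proof -
  have "range (idemp \<nu>) \<subseteq> path_images 0" by (force simp: path_images_def idemp_def)
  then obtain B where B: "range (idemp \<nu>) \<subseteq> B" "B \<subseteq> path_images 0" "independent B"
      "path_images 0 \<subseteq> span B"
    using maximal_independent_subset_extend[OF _ idemp_independent] by blast
  have "UNIV \<subseteq> span B"
    using span_mono[OF B(4)] span_path_images_0 by (simp add: span_span)
  then have "span B = UNIV" by blast
  moreover have "\<exists>i j. b = idemp \<nu> j * b * idemp \<nu> i" if "b \<in> B" for b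
  proof -
    obtain u where "b = \<nu> (pind u)" "is_path src tgt u"
      using B(2) \<open>b \<in> B\<close> by (auto simp: path_images_def)
    then show ?thesis using idemp_mult_pind_mult_idemp[of u "snd (snd u)" "fst u"] by metis
  qed
  moreover have "b \<in> jacobson_radical" if b: "b \<in> B - range (idemp \<nu>)" for b
  proof -
    obtain u where "b = \<nu> (pind u)" "is_path src tgt u"
      using B(2) b unfolding path_images_def by blast
    moreover obtain x as y where "u = (x, as, y)" by (cases u)
    ultimately have u: "b = \<nu> (pind (x, as, y))" "is_path src tgt (x, as, y)" by simp_all
    then have "as \<noteq> []" using b by (auto simp: idemp_def)
    then show ?thesis
      using pind_in_jacobson_radical[OF u(2)] u(1) by (simp add: path_len_def Suc_le_eq)
  qed
  ultimately show ?thesis using B unfolding algebra_basis_def by blast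
qed

lemma in_Der0_if_additive_path_weights:
  assumes lin: "Vector_Spaces.linear sc sc D"
    and eigen: "\<And>u. is_path src tgt u \<Longrightarrow> D (\<nu> (pind u)) = sc (c u) (\<nu> (pind u))"
    and additive: "\<And>u v. is_path src tgt u \<Longrightarrow> is_path src tgt v \<Longrightarrow> snd (snd u) = fst v \<Longrightarrow>
      c (pcat u v) = c u + c v"
  shows "D \<in> Der0 sc \<nu>"
proof -
  interpret D: Vector_Spaces.linear sc sc D by (rule lin)
  have "D (x * y) = D x * y + x * D y" for x y
  proof (rule span_induct2[where R = "\<lambda>x y. D (x * y) = D x * y + x * D y"])
    show "x \<in> span (path_images 0)" "y \<in> span (path_images 0)"
      using span_path_images_0 by simp_all
    show "subspace {x. D (x * y) = D x * y + x * D y}" for y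
      unfolding subspace_def
      by (simp add: distrib_right D.add D.scale scale_mult_left[symmetric] scale_right_distrib)
    show "subspace {y. D (x * y) = D x * y + x * D y}" for x
      unfolding subspace_def
      by (simp add: D.add D.scale scale_mult_right[symmetric] algebra_simps)
  next
    fix s t assume "s \<in> path_images 0" "t \<in> path_images 0"
    then obtain p q
      where pq: "s = \<nu> (pind p)" "is_path src tgt p" "t = \<nu> (pind q)" "is_path src tgt q"
      unfolding path_images_def by blast
    have st: "s * t = (if snd (snd q) = fst p then \<nu> (pind (pcat q p)) else 0)"
      using nu_pind_mult[OF pq(4) pq(2)] pq by simp
    have "D (s * t) = sc (c p + c q) (s * t)"
      using st eigen[OF is_path_pcat[OF pq(4) pq(2)]] additive[OF pq(4) pq(2)]
      by (simp add: add.commute)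
    also have "\<dots> = sc (c p) s * t + s * sc (c q) t"
      by (simp add: scale_left_distrib scale_mult_left[symmetric] scale_mult_right[symmetric])
    also have "\<dots> = D s * t + s * D t" using eigen pq by simp
    finally show "D (s * t) = D s * t + s * D t" .
  qed
  moreover have "D (idemp \<nu> i) = 0" for i
  proof -
    have "c (pcat (i, [], i) (i, [], i)) = c (i, [], i) + c (i, [], i)"
      by (rule additive) simp_all
    moreover have "pcat (i, [], i) (i, [], i) = (i, [], i)" by (simp add: pcat_def)
    ultimately have "c (i, [], i) = c (i, [], i) + c (i, [], i)" by metis
    then have "c (i, [], i) = 0" by (metis add_cancel_left_right)
    then show ?thesis using eigen[of "(i, [], i)"] by (simp add: idemp_def)
  qed
  ultimately show ?thesis using lin by (simp add: Der0_def)
qed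

abbreviation cls :: "('v,'e) walk \<Rightarrow> ('v,'e) walk set" where
  "cls \<equiv> htpy_class src tgt (ker src tgt \<nu>)"

lemma cls_eq_if_htpy: "htpy src tgt (ker src tgt \<nu>) w w' \<Longrightarrow> cls w = cls w'"
  unfolding htpy_class_def by (blast intro: htpy_sym htpy_trans)

lemma pi1_mult_cls:
  assumes c: "is_walk src tgt c" and d: "is_walk src tgt d" and cd: "wend d = wstart c"
  shows "cls c \<otimes>\<^bsub>pi1 src tgt (ker src tgt \<nu>) x0\<^esub> cls d = cls (wcat d c)"
proof -
  let ?h = "htpy src tgt (ker src tgt \<nu>)"
  have congruence: "?h (wcat d c) (wcat d' c')" if "?h c c'" "?h d d'" for c' d'
  proof -
    have "?h (wcat d c) (wcat d' c)" using that(2) c cd by (rule htpy_cat_right)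
    moreover have "?h (wcat d' c) (wcat d' c')"
      using that(1) htpy_imp_walks[OF that(2)] cd by (intro htpy_cat_left) simp_all
    ultimately show ?thesis by (rule htpy_trans)
  qed
  have "cls c \<otimes>\<^bsub>pi1 src tgt (ker src tgt \<nu>) x0\<^esub> cls d =
      {w. \<exists>c'\<in>cls c. \<exists>d'\<in>cls d. ?h (wcat d' c') w}"
    by (simp add: pi1_def)
  also have "\<dots> = cls (wcat d c)"
  proof (rule Set.set_eqI, rule iffI)
    fix w assume "w \<in> {w. \<exists>c'\<in>cls c. \<exists>d'\<in>cls d. ?h (wcat d' c') w}"
    then obtain c' d' where "?h c c'" "?h d d'" "?h (wcat d' c') w"
      unfolding htpy_class_def by blast
    then show "w \<in> cls (wcat d c)"
      using congruence unfolding htpy_class_def by (blast intro: htpy_trans)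
  next
    fix w assume "w \<in> cls (wcat d c)"
    then show "w \<in> {w. \<exists>c'\<in>cls c. \<exists>d'\<in>cls d. ?h (wcat d' c') w}"
      using htpy_refl[OF c] htpy_refl[OF d] unfolding htpy_class_def by blast
  qed
  finally show ?thesis .
qed

lemma hom_kplus_wcat:
  assumes f: "f \<in> hom (pi1 src tgt (ker src tgt \<nu>) x0) (kplus :: 'k monoid)"
    and c: "is_walk src tgt c" "wstart c = x0" "wend c = x0"
    and d: "is_walk src tgt d" "wstart d = x0" "wend d = x0"
  shows "f (cls (wcat d c)) = f (cls c) + f (cls d)"
proof -
  have "cls w \<in> carrier (pi1 src tgt (ker src tgt \<nu>) x0)"
    if "is_walk src tgt w" "wstart w = x0" "wend w = x0" for w
    using that by (auto simp: pi1_def)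
  then have "f (cls c \<otimes>\<^bsub>pi1 src tgt (ker src tgt \<nu>) x0\<^esub> cls d) = f (cls c) + f (cls d)"
    using f c d by (simp add: hom_def kplus_def)
  then show ?thesis using pi1_mult_cls[OF c(1) d(1)] c d by simp
qed

end

locale presented_algebra_walks = presented_algebra sc src tgt \<nu>
  for sc :: "'k::field \<Rightarrow> 'a::ring_1 \<Rightarrow> 'a" and src tgt :: "'e \<Rightarrow> 'v::finite"
    and \<nu> :: "(('v,'e) path \<Rightarrow> 'k) \<Rightarrow> 'a" +
  fixes x0 :: 'v and \<gamma> :: "'v \<Rightarrow> ('v,'e) walk"
  assumes is_walk_\<gamma>: "is_walk src tgt (\<gamma> x)"
    and wstart_\<gamma>: "wstart (\<gamma> x) = x0"
    and wend_\<gamma>: "wend (\<gamma> x) = x"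
begin

definition loop_of :: "('v,'e) path \<Rightarrow> ('v,'e) walk" where
  "loop_of u = wcat (wcat (\<gamma> (fst u)) (path_walk u)) (winv (\<gamma> (snd (snd u))))"

lemma loop_of_closed:
  "is_path src tgt u \<Longrightarrow> is_walk src tgt (loop_of u) \<and> wstart (loop_of u) = x0 \<and> wend (loop_of u) = x0"
  unfolding loop_of_def
  by (simp add: is_walk_\<gamma> wstart_\<gamma> wend_\<gamma> is_walk_wcat is_walk_winv is_walk_path_walk)

lemma htpy_loop_of_pcat:
  assumes u: "is_path src tgt u" and v: "is_path src tgt v" and uv: "snd (snd u) = fst v"
  shows "htpy src tgt (ker src tgt \<nu>) (wcat (loop_of u) (loop_of v)) (loop_of (pcat u v))"
proof -
  define g where "g = \<gamma> (fst v)"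
  define A where "A = wcat (\<gamma> (fst u)) (path_walk u)"
  define B where "B = wcat (path_walk v) (winv (\<gamma> (snd (snd v))))"
  have A: "is_walk src tgt A" "wend A = wend g"
    unfolding A_def g_def using u uv
    by (simp_all add: is_walk_\<gamma> wstart_\<gamma> wend_\<gamma> is_walk_wcat is_walk_path_walk)
  have B: "is_walk src tgt B" "wstart B = wend g"
    unfolding B_def g_def using v
    by (simp_all add: is_walk_\<gamma> wstart_\<gamma> wend_\<gamma> is_walk_wcat is_walk_winv is_walk_path_walk)
  have "htpy src tgt (ker src tgt \<nu>) (wcat A (wcat (winv g) g)) (wcat A (wend g, [], wend g))"
    using htpy_wcat_winv_self[OF is_walk_\<gamma>] A unfolding g_def by (intro htpy_cat_left) simp_all
  then have "htpy src tgt (ker src tgt \<nu>)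
      (wcat (wcat A (wcat (winv g) g)) B) (wcat (wcat A (wend g, [], wend g)) B)"
    using B by (intro htpy_cat_right) (simp_all add: wcat_def wend_def)
  moreover have "wcat (wcat A (wcat (winv g) g)) B = wcat (loop_of u) (loop_of v)"
    by (simp add: A_def B_def g_def loop_of_def wcat_def uv)
  moreover have "wcat (wcat A (wend g, [], wend g)) B = loop_of (pcat u v)"
    by (simp add: A_def B_def loop_of_def wcat_def path_walk_def pcat_def)
  ultimately show ?thesis by simp
qed

lemma theta_rep_in_Der0:
  assumes f: "f \<in> hom (pi1 src tgt (ker src tgt \<nu>) x0) (kplus :: 'k monoid)"
    and D: "theta_rep src tgt sc \<nu> \<gamma> f D"
  shows "D \<in> Der0 sc \<nu>"
proof (rule in_Der0_if_additive_path_weights)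
  show "Vector_Spaces.linear sc sc D" using D by (simp add: theta_rep_def)
  show "D (\<nu> (pind u)) = sc (f (cls (loop_of u))) (\<nu> (pind u))" if "is_path src tgt u" for u
    using D that unfolding theta_rep_def loop_of_def by blast
next
  fix u v assume u: "is_path src tgt u" and v: "is_path src tgt v" and uv: "snd (snd u) = fst v"
  have "f (cls (loop_of (pcat u v))) = f (cls (wcat (loop_of u) (loop_of v)))"
    using cls_eq_if_htpy[OF htpy_loop_of_pcat[OF u v uv]] by simp
  also have "\<dots> = f (cls (loop_of v)) + f (cls (loop_of u))"
    using loop_of_closed[OF u] loop_of_closed[OF v] by (intro hom_kplus_wcat[OF f]) simp_all
  finally show "f (cls (loop_of (pcat u v))) = f (cls (loop_of u)) + f (cls (loop_of v))"
    by (simp add: add.commute)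
qed

lemma image_theta_diagonalizable: "image_theta_diagonalizable src tgt sc \<nu> x0 \<gamma>"
proof -
  obtain B where B: "B \<subseteq> path_images 0" "algebra_basis sc \<nu> B"
    using exists_path_basis by blast
  have "\<exists>\<delta> \<in> Der0 sc \<nu>. diagonal_wrt sc B \<delta> \<and> (\<lambda>a. D a - \<delta> a) \<in> Int0 sc \<nu>"
    if f: "f \<in> hom (pi1 src tgt (ker src tgt \<nu>) x0) kplus" and D: "theta_rep src tgt sc \<nu> \<gamma> f D"
    for f D
  proof (intro bexI conjI)
    show "D \<in> Der0 sc \<nu>" using theta_rep_in_Der0[OF f D] .
    show "diagonal_wrt sc B D"
      using B(1) D unfolding diagonal_wrt_def path_images_def theta_rep_def by blast
    have "(\<lambda>a. D a - D a) = (\<lambda>a. 0 * a - a * 0)" by simp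
    then show "(\<lambda>a. D a - D a) \<in> Int0 sc \<nu>" unfolding Int0_def using span_zero by blast
  qed
  then show ?thesis using B(2) unfolding image_theta_diagonalizable_def by blast
qed

end

theorem proposition2p4:
  fixes src tgt :: "'e::finite \<Rightarrow> 'v::finite"
    and sc :: "'k::alg_closed_field \<Rightarrow> 'a::ring_1 \<Rightarrow> 'a"
    and \<nu> :: "(('v,'e) path \<Rightarrow> 'k) \<Rightarrow> 'a"
    and T :: "'e set" and x0 :: 'v and \<gamma> :: "'v \<Rightarrow> ('v,'e) walk"
  assumes "k_algebra sc"
    and "finite_dimensional sc"
    and "connected_algebra TYPE('a)"
    and "no_oriented_cycles src tgt"
    and "presentation src tgt sc \<nu>"
    and "maximal_tree src tgt T"
    and "tree_walks src tgt T x0 \<gamma>"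
  shows "image_theta_diagonalizable src tgt sc \<nu> x0 \<gamma>"
proof -
  interpret field_algebra sc using assms(1) by (rule field_algebra_if_k_algebra)
  interpret presented_algebra_walks sc src tgt \<nu> x0 \<gamma>
    using assms(5,7) by unfold_locales (auto simp: tree_walks_def walk_in_def)
  show ?thesis by (rule image_theta_diagonalizable)
qed

end
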